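(* Let $\{M_i(t_i),t_i\ge0\}$, $i=1,\dots,d$, be independent one-parameter integrable processes, let $\mathcal{F}^{(i)}(t_i)=\sigma(M_i(s_i):s_i\le t_i)$ and $\mathcal{F}(\mathbf{t})=\bigvee_{i=1}^d\mathcal{F}^{(i)}(t_i)$ for $\mathbf{t}=(t_1,\dots,t_d)\in\mathbb{R}^d_+$. The following are equivalent: (i) $\{\sum_{i=1}^dM_i(t_i),\mathbf{t}\in\mathbb{R}^d_+\}$ is a $d$-parameter $\{\mathcal{F}(\mathbf{t})\}$-martingale and, for each $i$, $\mathbb{E}M_i(s_i)=\mathbb{E}M_i(t_i)$ for all $s_i,t_i\ge0$; (ii) for every $1\le d'\le d$, $\{\sum_{i=1}^{d'}M_i(t_i),(t_1,\dots,t_{d'})\in\mathbb{R}^{d'}_+\}$ is a $d'$-parameter martingale with respect to $\mathcal{F}'(t_1,\dots,t_{d'})=\bigvee_{i=1}^{d'}\mathcal{F}^{(i)}(t_i)$; (iii) for each $i=1,\dots,d$, $\{M_i(t_i),t_i\ge0\}$ is a one-parameter martingale with respect to its natural filtration.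
   Context: $\mathbb{R}^d_+$ carries the componentwise order $\preceq$. A $d$-parameter filtration is a family $\{\mathcal{F}(\mathbf{t})\}$ of complete sub-$\sigma$-fields with $\mathcal{F}(\mathbf{s})\subseteq\mathcal{F}(\mathbf{t})$ for $\mathbf{s}\preceq\mathbf{t}$. A $d$-parameter martingale is an integrable adapted process $M(\mathbf{t})$ with $\mathbb{E}(M(\mathbf{t})\mid\mathcal{F}(\mathbf{s}))=M(\mathbf{s})$ a.s. whenever $\mathbf{s}\preceq\mathbf{t}$. *)

theory Defs
  imports "HOL-Probability.Probability"
begin

definition nat_filt :: "'a measure \<Rightarrow> (nat \<Rightarrow> real \<Rightarrow> 'a \<Rightarrow> real) \<Rightarrow> nat \<Rightarrow> real \<Rightarrow> 'a measure" where
  "nat_filt P X i t = sigma (space P)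
     {X i s -` B \<inter> space P | s B. 0 \<le> s \<and> s \<le> t \<and> B \<in> sets borel}"

definition join_filt :: "'a measure \<Rightarrow> (nat \<Rightarrow> real \<Rightarrow> 'a \<Rightarrow> real) \<Rightarrow> nat set \<Rightarrow> (nat \<Rightarrow> real) \<Rightarrow> 'a measure" where
  "join_filt P X I t = sigma (space P) (\<Union>i\<in>I. sets (nat_filt P X i (t i)))"

definition param_martingale :: "'a measure \<Rightarrow> 'i set \<Rightarrow> (('i \<Rightarrow> real) \<Rightarrow> 'a measure)
    \<Rightarrow> (('i \<Rightarrow> real) \<Rightarrow> 'a \<Rightarrow> real) \<Rightarrow> bool" where
  "param_martingale P I F Y \<longleftrightarrow>
     (\<forall>t. (\<forall>i\<in>I. 0 \<le> t i) \<longrightarrow>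
        subalgebra P (F t) \<and> integrable P (Y t) \<and> Y t \<in> borel_measurable (F t)) \<and>
     (\<forall>s t. (\<forall>i\<in>I. 0 \<le> s i \<and> s i \<le> t i) \<longrightarrow>
        (AE \<omega> in P. real_cond_exp P (F s) (Y t) \<omega> = Y s \<omega>))"

definition martingale1 :: "'a measure \<Rightarrow> (real \<Rightarrow> 'a measure) \<Rightarrow> (real \<Rightarrow> 'a \<Rightarrow> real) \<Rightarrow> bool" where
  "martingale1 P F Y \<longleftrightarrow>
     (\<forall>t\<ge>0. subalgebra P (F t) \<and> integrable P (Y t) \<and> Y t \<in> borel_measurable (F t)) \<and>
     (\<forall>s t. 0 \<le> s \<and> s \<le> t \<longrightarrow> (AE \<omega> in P. real_cond_exp P (F s) (Y t) \<omega> = Y s \<omega>))"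

end

theory Submission
  imports Defs
begin

(*
  (iii) implies (ii): fix s <= t. For each coordinate j the increment X_j(t_j) - X_j(s_j) is
  measurable for F^(j)(t_j), hence independent of the join H_j of the other coordinate
  filtrations at s, and by (iii) it integrates to zero over every set of F^(j)(s_j). Its
  integral over a \<inter> b (a in F^(j)(s_j), b in H_j) therefore factorises and vanishes; these sets
  form a pi-system generating F(s), so a Dynkin argument makes the increment integrate to zero
  over every set of F(s). Summing over j gives the martingale property of the sum.
  Conversely, moving only the j-th time coordinate of a multi-parameter sum martingale shows
  that X_j is a martingale for F^(j)(t_j), which is contained in F(t); martingales have
  constant expectation, which supplies the extra condition in (i).
*)

lemma set_integrable_of_integrable:
  fixes f :: "'a \<Rightarrow> real"
  shows "integrable M f \<Longrightarrow> A \<in> sets M \<Longrightarrow> set_integrable M A f"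
  unfolding set_integrable_def by (rule integrable_mult_indicator)

lemma set_integral_sum:
  fixes f :: "'i \<Rightarrow> 'a \<Rightarrow> real"
  assumes "\<And>i. i \<in> I \<Longrightarrow> set_integrable M A (f i)"
  shows "(LINT x:A|M. (\<Sum>i\<in>I. f i x)) = (\<Sum>i\<in>I. LINT x:A|M. f i x)"
  using assms unfolding set_lebesgue_integral_def set_integrable_def
  by (simp add: sum_distrib_left)

lemma set_integral_eq_zero_sigma_sets:
  fixes h :: "'a \<Rightarrow> real"
  assumes stable: "Int_stable K" and K_M: "K \<subseteq> sets M" and "space M \<in> K"
    and h: "integrable M h" and zero: "\<And>S. S \<in> K \<Longrightarrow> (LINT x:S|M. h x) = 0"
    and C: "C \<in> sigma_sets (space M) K"
  shows "(LINT x:C|M. h x) = 0"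
proof -
  have sigma_M: "sigma_sets (space M) K \<subseteq> sets M"
    using K_M by (rule sets.sigma_sets_subset)
  have sint: "set_integrable M S h" if "S \<in> sigma_sets (space M) K" for S
    using that sigma_M h by (blast intro: set_integrable_of_integrable)
  have "K \<subseteq> Pow (space M)"
    using K_M sets.sets_into_space by blast
  from stable this C show ?thesis
  proof (induct rule: sigma_sets_induct_disjoint)
    case (basic S)
    then show ?case
      by (rule zero)
  next
    case empty
    then show ?case
      by (simp add: set_lebesgue_integral_def)
  next
    case (compl S)
    have "S \<subseteq> space M"
      using compl(1) sigma_M sets.sets_into_space by blast
    have "(LINT x:space M|M. h x) = (LINT x:S|M. h x) + (LINT x:space M - S|M. h x)"
      using \<open>S \<subseteq> space M\<close> compl(1) sigma_sets.Compl[OF compl(1)]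
      by (subst set_integral_Un[symmetric]) (auto intro: sint simp: Un_absorb1)
    then show ?case
      using compl(2) zero[OF \<open>space M \<in> K\<close>] by simp
  next
    case (union S)
    have S_K: "S i \<in> sigma_sets (space M) K" for i
      using union(2) by blast
    have "(LINT x:(\<Union>i. S i)|M. h x) = (\<Sum>i. LINT x:S i|M. h x)"
    proof (rule lebesgue_integral_countable_add)
      show "S i \<in> sets M" for i
        using S_K sigma_M by blast
      show "S i \<inter> S j = {}" if "i \<noteq> j" for i j
        using union(1) that by (simp add: disjoint_family_on_def)
      show "set_integrable M (\<Union>i. S i) h"
        using sint[OF sigma_sets.Union[OF S_K]] .
    qed
    then show ?case
      using union(3) by simp
  qed
qed

context prob_space
begin

lemma indep_set_mono:
  "indep_set A B \<Longrightarrow> A' \<subseteq> A \<Longrightarrow> B' \<subseteq> B \<Longrightarrow> indep_set A' B'"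
  unfolding indep_sets2_eq by blast

lemma indep_var_of_indep_set:
  fixes u v :: "'a \<Rightarrow> real"
  assumes subA: "subalgebra M A" and subH: "subalgebra M H"
    and ind: "indep_set (sets A) (sets H)"
    and u: "u \<in> borel_measurable A" and v: "v \<in> borel_measurable H"
  shows "indep_var borel u borel v"
proof -
  have generated: "sigma_sets (space M) {f -` B \<inter> space M | B. B \<in> sets borel} \<subseteq> sets N"
    if "subalgebra M N" "f \<in> borel_measurable N" for N and f :: "'a \<Rightarrow> real"
  proof (rule sets.sigma_sets_subset')
    show "{f -` B \<inter> space M | B. B \<in> sets borel} \<subseteq> sets N"
      using that measurable_sets[OF that(2)] by (auto simp: subalgebra_def)
    show "space M \<in> sets N"
      using that sets.top[of N] by (simp add: subalgebra_def)
  qed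
  show ?thesis
    unfolding indep_var_eq
    using measurable_from_subalg[OF subA u] measurable_from_subalg[OF subH v]
      indep_set_mono[OF ind generated[OF subA u] generated[OF subH v]]
    by simp
qed

lemma set_integral_Int_indep:
  fixes h :: "'a \<Rightarrow> real"
  assumes subA: "subalgebra M A" and subH: "subalgebra M H"
    and ind: "indep_set (sets A) (sets H)"
    and h: "integrable M h" "h \<in> borel_measurable A"
    and a: "a \<in> sets A" and b: "b \<in> sets H"
  shows "(LINT x:a \<inter> b|M. h x) = (LINT x:a|M. h x) * prob b"
proof -
  have "a \<in> sets M" "b \<in> sets M"
    using subA subH a b by (auto simp: subalgebra_def)
  have "indep_var borel (\<lambda>x. indicator a x * h x) borel (indicator b :: 'a \<Rightarrow> real)"
    using subA subH ind by (rule indep_var_of_indep_set) (use a b h in measurable)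
  moreover have "integrable M (\<lambda>x. indicator a x * h x)"
    using integrable_mult_indicator[OF \<open>a \<in> sets M\<close> h(1)] by simp
  moreover have "integrable M (indicator b :: 'a \<Rightarrow> real)"
    using \<open>b \<in> sets M\<close> by (simp add: integrable_indicator_iff less_top[symmetric])
  ultimately have "(\<integral>x. (indicator a x * h x) * indicator b x \<partial>M) =
                     (\<integral>x. indicator a x * h x \<partial>M) * (\<integral>x. indicator b x \<partial>M)"
    by (rule indep_var_lebesgue_integral)
  then show ?thesis
    using \<open>b \<in> sets M\<close>
    by (simp add: set_lebesgue_integral_def indicator_inter_arith ac_simps)
qed

lemma set_integral_eq_zero_sigma_Un_indep:
  fixes h :: "'a \<Rightarrow> real"
  assumes subA: "subalgebra M A" and subH: "subalgebra M H" and subF: "subalgebra A F"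
    and ind: "indep_set (sets A) (sets H)"
    and h: "integrable M h" "h \<in> borel_measurable A"
    and zero: "\<And>a. a \<in> sets F \<Longrightarrow> (LINT x:a|M. h x) = 0"
    and C: "C \<in> sigma_sets (space M) (sets F \<union> sets H)"
  shows "(LINT x:C|M. h x) = 0"
proof -
  let ?K = "{a \<inter> b | a b. a \<in> sets F \<and> b \<in> sets H}"
  have space: "space F = space M" "space H = space M"
    and F_M: "sets F \<subseteq> sets M" and H_M: "sets H \<subseteq> sets M"
    using subA subH subF by (auto simp: subalgebra_def)
  have "sets F \<union> sets H \<subseteq> ?K"
  proof (rule subsetI, elim UnE)
    fix x assume "x \<in> sets F"
    then show "x \<in> ?K"
      using sets.top[of H] sets.sets_into_space[of x F] space
      by (intro CollectI exI[of _ x] exI[of _ "space M"]) auto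
  next
    fix x assume "x \<in> sets H"
    then show "x \<in> ?K"
      using sets.top[of F] sets.sets_into_space[of x H] space
      by (intro CollectI exI[of _ "space M"] exI[of _ x]) auto
  qed
  then have "sigma_sets (space M) (sets F \<union> sets H) \<subseteq> sigma_sets (space M) ?K"
    by (rule sigma_sets_mono')
  show ?thesis
  proof (rule set_integral_eq_zero_sigma_sets)
    show "Int_stable ?K"
    proof (rule Int_stableI)
      fix x y assume "x \<in> ?K" "y \<in> ?K"
      then obtain a b a' b' where "x = a \<inter> b" "y = a' \<inter> b'"
        and "a \<in> sets F" "b \<in> sets H" "a' \<in> sets F" "b' \<in> sets H"
        by blast
      then show "x \<inter> y \<in> ?K"
        by (intro CollectI exI[of _ "a \<inter> a'"] exI[of _ "b \<inter> b'"]) auto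
    qed
    show "?K \<subseteq> sets M"
      using F_M H_M by blast
    show "space M \<in> ?K"
      using \<open>sets F \<union> sets H \<subseteq> ?K\<close> sets.top[of F] space by auto
    show "(LINT x:S|M. h x) = 0" if "S \<in> ?K" for S
      using that set_integral_Int_indep[OF subA subH ind h] subF zero
      by (auto simp: subalgebra_def)
    show "C \<in> sigma_sets (space M) ?K"
      using C \<open>sigma_sets (space M) (sets F \<union> sets H) \<subseteq> sigma_sets (space M) ?K\<close> by blast
  qed (rule h(1))
qed

lemma sigma_finite_subalgebra_of_subalgebra:
  "subalgebra M F \<Longrightarrow> sigma_finite_subalgebra M F"
  by (intro finite_measure_subalgebra_is_sigma_finite) unfold_locales

lemma real_cond_exp_eq_iff_set_integral_eq:
  fixes f g :: "'a \<Rightarrow> real"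
  assumes subF: "subalgebra M F" and f: "integrable M f" and g: "integrable M g"
    and gF: "g \<in> borel_measurable F"
  shows "(AE x in M. real_cond_exp M F f x = g x) \<longleftrightarrow>
           (\<forall>A\<in>sets F. (LINT x:A|M. f x) = (LINT x:A|M. g x))"
proof
  interpret F: sigma_finite_subalgebra M F
    using subF by (rule sigma_finite_subalgebra_of_subalgebra)
  show "\<forall>A\<in>sets F. (LINT x:A|M. f x) = (LINT x:A|M. g x)"
    if ae: "AE x in M. real_cond_exp M F f x = g x"
  proof
    fix A assume A: "A \<in> sets F"
    then have "A \<in> sets M"
      using subF by (auto simp: subalgebra_def)
    have "(LINT x:A|M. f x) = (LINT x:A|M. real_cond_exp M F f x)"
      by (rule F.real_cond_exp_intA[OF f A])
    also have "\<dots> = (LINT x:A|M. g x)"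
      using ae \<open>A \<in> sets M\<close> g by (intro set_lebesgue_integral_cong_AE) auto
    finally show "(LINT x:A|M. f x) = (LINT x:A|M. g x)" .
  qed
  show "AE x in M. real_cond_exp M F f x = g x"
    if "\<forall>A\<in>sets F. (LINT x:A|M. f x) = (LINT x:A|M. g x)"
    using that f g gF by (intro F.real_cond_exp_charact) auto
qed

end

lemma space_nat_filt [simp]: "space (nat_filt M X i t) = space M"
  unfolding nat_filt_def by (rule space_measure_of_conv)

lemma sets_nat_filt:
  "sets (nat_filt M X i t) =
     sigma_sets (space M) {X i s -` B \<inter> space M | s B. 0 \<le> s \<and> s \<le> t \<and> B \<in> sets borel}"
  unfolding nat_filt_def by (rule sets_measure_of) auto

lemma space_join_filt [simp]: "space (join_filt M X I t) = space M"
  unfolding join_filt_def by (rule space_measure_of_conv)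

lemma sets_join_filt:
  "sets (join_filt M X I t) = sigma_sets (space M) (\<Union>i\<in>I. sets (nat_filt M X i (t i)))"
  unfolding join_filt_def
  by (rule sets_measure_of) (metis UN_least sets.space_closed space_nat_filt)

lemma nat_filt_mono: "s \<le> t \<Longrightarrow> sets (nat_filt M X i s) \<subseteq> sets (nat_filt M X i t)"
  unfolding sets_nat_filt by (rule sigma_sets_subseteq) force

lemma nat_filt_subset_join_filt:
  "i \<in> I \<Longrightarrow> sets (nat_filt M X i (t i)) \<subseteq> sets (join_filt M X I t)"
  unfolding sets_join_filt by (auto intro: sigma_sets.Basic)

lemma join_filt_subset_sigma_Un:
  assumes "j \<in> I"
  shows "sets (join_filt M X I t) \<subseteq>
           sigma_sets (space M) (sets (nat_filt M X j (t j)) \<union> sets (join_filt M X (I - {j}) t))"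
  unfolding sets_join_filt[of M X I]
proof (rule sigma_sets_mono, safe)
  fix i A assume "i \<in> I" "A \<in> sets (nat_filt M X i (t i))"
  then show "A \<in> sigma_sets (space M) (sets (nat_filt M X j (t j)) \<union> sets (join_filt M X (I - {j}) t))"
    using nat_filt_subset_join_filt[of i "I - {j}" M X t]
    by (cases "i = j") (auto intro: sigma_sets.Basic)
qed

lemma measurable_nat_filt: "0 \<le> t \<Longrightarrow> X i t \<in> borel_measurable (nat_filt M X i t)"
  unfolding measurable_def sets_nat_filt space_nat_filt by (auto intro!: sigma_sets.Basic)

lemma measurable_join_filt:
  assumes "i \<in> I" "0 \<le> t i"
  shows "X i (t i) \<in> borel_measurable (join_filt M X I t)"
proof (rule measurable_from_subalg)
  show "subalgebra (join_filt M X I t) (nat_filt M X i (t i))"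
    using nat_filt_subset_join_filt[OF assms(1)] by (simp add: subalgebra_def)
qed (rule measurable_nat_filt[OF assms(2)])

lemma subalgebra_nat_filt:
  assumes "\<And>s. 0 \<le> s \<Longrightarrow> s \<le> t \<Longrightarrow> X i s \<in> borel_measurable M"
  shows "subalgebra M (nat_filt M X i t)"
  unfolding subalgebra_def sets_nat_filt
  using assms by (auto intro!: sets.sigma_sets_subset measurable_sets)

lemma subalgebra_join_filt:
  assumes "\<And>i s. i \<in> I \<Longrightarrow> 0 \<le> s \<Longrightarrow> X i s \<in> borel_measurable M"
  shows "subalgebra M (join_filt M X I t)"
proof -
  have "sets (nat_filt M X i (t i)) \<subseteq> sets M" if "i \<in> I" for i
    using subalgebra_nat_filt[of "t i" X i M] assms that by (auto simp: subalgebra_def)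
  then show ?thesis
    unfolding subalgebra_def sets_join_filt by (auto intro!: sets.sigma_sets_subset)
qed

lemma sets_nat_filt_subset_path_events:
  "sets (nat_filt M X i T) \<subseteq> sigma_sets (space M)
     {(\<lambda>\<omega>. restrict (\<lambda>t. X i t \<omega>) {0..}) -` A \<inter> space M | A. A \<in> sets (Pi\<^sub>M {0..} (\<lambda>_. borel))}"
  unfolding sets_nat_filt
proof (rule sigma_sets_subseteq, safe)
  fix t :: real and B :: "real set" assume t: "0 \<le> t" and B: "B \<in> sets borel"
  let ?A = "(\<lambda>f. f t) -` B \<inter> space (Pi\<^sub>M {0::real..} (\<lambda>_. borel :: real measure))"
  have "?A \<in> sets (Pi\<^sub>M {0..} (\<lambda>_. borel))"
    using t B by (intro measurable_sets[OF measurable_component_singleton]) auto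
  moreover have "X i t -` B \<inter> space M = (\<lambda>\<omega>. restrict (\<lambda>t. X i t \<omega>) {0..}) -` ?A \<inter> space M"
    using t by (auto simp: space_PiM)
  ultimately show "\<exists>A. X i t -` B \<inter> space M = (\<lambda>\<omega>. restrict (\<lambda>t. X i t \<omega>) {0..}) -` A \<inter> space M
                      \<and> A \<in> sets (Pi\<^sub>M {0..} (\<lambda>_. borel))"
    by blast
qed

context prob_space
begin

lemma martingale1_iff_set_integral:
  "martingale1 M F Y \<longleftrightarrow>
     (\<forall>t\<ge>0. subalgebra M (F t) \<and> integrable M (Y t) \<and> Y t \<in> borel_measurable (F t)) \<and>
     (\<forall>s t. 0 \<le> s \<and> s \<le> t \<longrightarrow> (\<forall>A\<in>sets (F s). (LINT x:A|M. Y t x) = (LINT x:A|M. Y s x)))"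
  unfolding martingale1_def
  by (auto simp: real_cond_exp_eq_iff_set_integral_eq)

lemma param_martingale_iff_set_integral:
  "param_martingale M I F Y \<longleftrightarrow>
     (\<forall>t. (\<forall>i\<in>I. 0 \<le> t i) \<longrightarrow>
        subalgebra M (F t) \<and> integrable M (Y t) \<and> Y t \<in> borel_measurable (F t)) \<and>
     (\<forall>s t. (\<forall>i\<in>I. 0 \<le> s i \<and> s i \<le> t i) \<longrightarrow>
        (\<forall>A\<in>sets (F s). (LINT x:A|M. Y t x) = (LINT x:A|M. Y s x)))"
proof -
  have pointwise: "(AE x in M. real_cond_exp M (F s) (Y t) x = Y s x) \<longleftrightarrow>
                     (\<forall>A\<in>sets (F s). (LINT x:A|M. Y t x) = (LINT x:A|M. Y s x))"
    if adapted: "\<forall>t. (\<forall>i\<in>I. 0 \<le> t i) \<longrightarrow>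
                   subalgebra M (F t) \<and> integrable M (Y t) \<and> Y t \<in> borel_measurable (F t)"
      and st: "\<forall>i\<in>I. 0 \<le> s i \<and> s i \<le> t i" for s t
  proof -
    have "\<forall>i\<in>I. 0 \<le> s i" "\<forall>i\<in>I. 0 \<le> t i"
      using st by (auto intro: order_trans)
    then show ?thesis
      using adapted by (intro real_cond_exp_eq_iff_set_integral_eq) auto
  qed
  show ?thesis
    unfolding param_martingale_def
  proof (rule conj_cong[OF refl])
    assume "\<forall>t. (\<forall>i\<in>I. 0 \<le> t i) \<longrightarrow>
              subalgebra M (F t) \<and> integrable M (Y t) \<and> Y t \<in> borel_measurable (F t)"
    then show "(\<forall>s t. (\<forall>i\<in>I. 0 \<le> s i \<and> s i \<le> t i) \<longrightarrow>
                 (AE x in M. real_cond_exp M (F s) (Y t) x = Y s x)) \<longleftrightarrow>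
               (\<forall>s t. (\<forall>i\<in>I. 0 \<le> s i \<and> s i \<le> t i) \<longrightarrow>
                 (\<forall>A\<in>sets (F s). (LINT x:A|M. Y t x) = (LINT x:A|M. Y s x)))"
      using pointwise by simp
  qed
qed

lemma martingale1_expectation_const:
  assumes mart: "martingale1 M F Y" and "0 \<le> s" "0 \<le> t"
  shows "expectation (Y s) = expectation (Y t)"
proof -
  have adapted: "\<forall>t\<ge>0. subalgebra M (F t) \<and> integrable M (Y t) \<and> Y t \<in> borel_measurable (F t)"
    and fair: "\<forall>s t. 0 \<le> s \<and> s \<le> t \<longrightarrow>
                 (\<forall>A\<in>sets (F s). (LINT x:A|M. Y t x) = (LINT x:A|M. Y s x))"
    using mart unfolding martingale1_iff_set_integral by blast+
  have "expectation (Y r) = expectation (Y 0)" if "0 \<le> r" for r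
  proof -
    have "space M \<in> sets (F 0)"
      using adapted sets.top[of "F 0"] by (simp add: subalgebra_def)
    then have "(LINT x:space M|M. Y r x) = (LINT x:space M|M. Y 0 x)"
      using fair[rule_format, of 0 r "space M"] that by simp
    then show ?thesis
      using adapted that by (simp add: set_integral_space)
  qed
  from this[OF \<open>0 \<le> s\<close>] this[OF \<open>0 \<le> t\<close>] show ?thesis
    by simp
qed

lemma martingale1_of_param_martingale:
  fixes X :: "nat \<Rightarrow> real \<Rightarrow> 'a \<Rightarrow> real"
  assumes "finite I" "j \<in> I"
    and integ: "\<And>i t. i \<in> I \<Longrightarrow> 0 \<le> t \<Longrightarrow> integrable M (X i t)"
    and mart: "param_martingale M I (join_filt M X I) (\<lambda>t \<omega>. \<Sum>i\<in>I. X i (t i) \<omega>)"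
  shows "martingale1 M (nat_filt M X j) (X j)"
  unfolding martingale1_iff_set_integral
proof (intro conjI allI impI ballI)
  fix t :: real assume "0 \<le> t"
  then show "subalgebra M (nat_filt M X j t)" "integrable M (X j t)"
      "X j t \<in> borel_measurable (nat_filt M X j t)"
    using integ \<open>j \<in> I\<close> by (auto intro: subalgebra_nat_filt measurable_nat_filt)
next
  fix s t :: real and A assume st: "0 \<le> s \<and> s \<le> t" and A: "A \<in> sets (nat_filt M X j s)"
  define u where "u = (\<lambda>_::nat. s)"
  define v where "v = u(j := t)"
  define R where "R x = (\<Sum>i\<in>I - {j}. X i s x)" for x
  have "A \<in> sets (join_filt M X I u)"
    using A nat_filt_subset_join_filt[OF \<open>j \<in> I\<close>, of M X u] by (auto simp: u_def)
  then have "A \<in> sets M"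
    using subalgebra_join_filt[of I X M u] integ by (auto simp: subalgebra_def)
  have int_A: "set_integrable M A (X i r)" if "i \<in> I" "0 \<le> r" for i r
    using integ[OF that] \<open>A \<in> sets M\<close> by (rule set_integrable_of_integrable)
  have int_R: "set_integrable M A R"
    unfolding R_def using st \<open>A \<in> sets M\<close>
    by (intro set_integrable_of_integrable Bochner_Integration.integrable_sum integ) auto
  have split: "(\<Sum>i\<in>I. X i (w i) x) = X j (w j) x + R x" if "\<forall>i\<in>I - {j}. w i = s" for w x
    unfolding R_def using \<open>finite I\<close> \<open>j \<in> I\<close> that by (simp add: sum.remove)
  have "(LINT x:A|M. (\<Sum>i\<in>I. X i (v i) x)) = (LINT x:A|M. (\<Sum>i\<in>I. X i (u i) x))"
  proof -
    have "\<forall>i\<in>I. 0 \<le> u i \<and> u i \<le> v i"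
      using st by (simp add: u_def v_def)
    then show ?thesis
      using mart[unfolded param_martingale_iff_set_integral] \<open>A \<in> sets (join_filt M X I u)\<close>
      by blast
  qed
  then have "(LINT x:A|M. X j t x + R x) = (LINT x:A|M. X j s x + R x)"
    by (simp add: split u_def v_def)
  then show "(LINT x:A|M. X j t x) = (LINT x:A|M. X j s x)"
    using int_A[OF \<open>j \<in> I\<close>] int_R st by simp
qed

lemma indep_set_nat_filt_join_filt:
  fixes X :: "nat \<Rightarrow> real \<Rightarrow> 'a \<Rightarrow> real"
  assumes indep: "indep_vars (\<lambda>i. Pi\<^sub>M {0..} (\<lambda>_. borel)) (\<lambda>i \<omega>. restrict (\<lambda>t. X i t \<omega>) {0..}) I"
    and "j \<in> I"
  shows "indep_set (sets (nat_filt M X j T)) (sets (join_filt M X (I - {j}) s))"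
proof -
  define V where "V i = {(\<lambda>\<omega>. restrict (\<lambda>t. X i t \<omega>) {0..}) -` A \<inter> space M | A.
                           A \<in> sets (Pi\<^sub>M {0::real..} (\<lambda>_. borel :: real measure))}" for i
  have "Int_stable (V i)" for i
  proof (rule Int_stableI)
    fix a b assume "a \<in> V i" "b \<in> V i"
    then obtain A B where "a = (\<lambda>\<omega>. restrict (\<lambda>t. X i t \<omega>) {0..}) -` A \<inter> space M"
      "b = (\<lambda>\<omega>. restrict (\<lambda>t. X i t \<omega>) {0..}) -` B \<inter> space M"
      "A \<in> sets (Pi\<^sub>M {0::real..} (\<lambda>_. borel))" "B \<in> sets (Pi\<^sub>M {0::real..} (\<lambda>_. borel))"
      unfolding V_def by blast
    then show "a \<inter> b \<in> V i"
      unfolding V_def by (intro CollectI exI[of _ "A \<inter> B"]) auto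
  qed
  moreover have "indep_sets V (\<Union>b. case_bool {j} (I - {j}) b)"
    using indep \<open>j \<in> I\<close> unfolding indep_vars_def2 V_def UNIV_bool by (auto simp: insert_absorb)
  moreover have "disjoint_family_on (case_bool {j} (I - {j})) UNIV"
    by (auto simp: disjoint_family_on_def UNIV_bool)
  ultimately have "indep_sets (\<lambda>b. sigma_sets (space M) (\<Union>i\<in>case_bool {j} (I - {j}) b. V i)) UNIV"
    by (intro indep_sets_collect_sigma) auto
  then have indep_V: "indep_set (sigma_sets (space M) (V j))
                                (sigma_sets (space M) (\<Union>i\<in>I - {j}. V i))"
    unfolding indep_set_def by (rule indep_sets_mono_sets) (simp split: bool.split)
  have nat_filt_V: "sets (nat_filt M X i r) \<subseteq> sigma_sets (space M) (V i)" for i r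
    unfolding V_def by (rule sets_nat_filt_subset_path_events)
  have "sets (join_filt M X (I - {j}) s) \<subseteq> sigma_sets (space M) (\<Union>i\<in>I - {j}. V i)"
    unfolding sets_join_filt
  proof (rule sigma_sets_mono, rule subsetI, elim UN_E)
    fix x i assume "i \<in> I - {j}" "x \<in> sets (nat_filt M X i (s i))"
    moreover have "sigma_sets (space M) (V i) \<subseteq> sigma_sets (space M) (\<Union>i\<in>I - {j}. V i)"
      using \<open>i \<in> I - {j}\<close> by (intro sigma_sets_mono') auto
    ultimately show "x \<in> sigma_sets (space M) (\<Union>i\<in>I - {j}. V i)"
      using nat_filt_V by blast
  qed
  then show ?thesis
    using indep_set_mono[OF indep_V nat_filt_V] by blast
qed

lemma martingale1_set_integral_join_filt:
  fixes X :: "nat \<Rightarrow> real \<Rightarrow> 'a \<Rightarrow> real"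
  assumes integ: "\<And>i t. i \<in> I \<Longrightarrow> 0 \<le> t \<Longrightarrow> integrable M (X i t)"
    and indep: "indep_vars (\<lambda>i. Pi\<^sub>M {0..} (\<lambda>_. borel)) (\<lambda>i \<omega>. restrict (\<lambda>t. X i t \<omega>) {0..}) I"
    and "j \<in> I" and mart: "martingale1 M (nat_filt M X j) (X j)"
    and s: "\<forall>i\<in>I. 0 \<le> s i" and "s j \<le> t"
    and C: "C \<in> sets (join_filt M X I s)"
  shows "(LINT x:C|M. X j t x) = (LINT x:C|M. X j (s j) x)"
proof -
  have meas: "X i r \<in> borel_measurable M" if "i \<in> I" "0 \<le> r" for i r
    using integ[OF that] by blast
  have "0 \<le> s j" "0 \<le> t"
    using s \<open>j \<in> I\<close> \<open>s j \<le> t\<close> by auto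
  have "C \<in> sets M"
    using subalgebra_join_filt[of I X M s] meas C by (auto simp: subalgebra_def)
  have sub_j: "subalgebra (nat_filt M X j t) (nat_filt M X j (s j))"
    using nat_filt_mono[OF \<open>s j \<le> t\<close>] by (simp add: subalgebra_def)
  have "(LINT x:C|M. X j t x - X j (s j) x) = 0"
  proof (rule set_integral_eq_zero_sigma_Un_indep)
    show "subalgebra M (nat_filt M X j t)"
      using meas \<open>j \<in> I\<close> by (intro subalgebra_nat_filt) auto
    show "subalgebra M (join_filt M X (I - {j}) s)"
      using meas by (intro subalgebra_join_filt) auto
    show "indep_set (sets (nat_filt M X j t)) (sets (join_filt M X (I - {j}) s))"
      using indep \<open>j \<in> I\<close> by (rule indep_set_nat_filt_join_filt)
    show "integrable M (\<lambda>x. X j t x - X j (s j) x)"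
      using integ \<open>j \<in> I\<close> \<open>0 \<le> s j\<close> \<open>0 \<le> t\<close> by auto
    have "X j (s j) \<in> borel_measurable (nat_filt M X j t)"
      using sub_j measurable_nat_filt[OF \<open>0 \<le> s j\<close>] by (rule measurable_from_subalg)
    then show "(\<lambda>x. X j t x - X j (s j) x) \<in> borel_measurable (nat_filt M X j t)"
      using measurable_nat_filt[OF \<open>0 \<le> t\<close>] by measurable
    show "(LINT x:a|M. X j t x - X j (s j) x) = 0" if a: "a \<in> sets (nat_filt M X j (s j))" for a
    proof -
      have "a \<in> sets M"
        using subalgebra_nat_filt[of "s j" X j M] meas \<open>j \<in> I\<close> a by (auto simp: subalgebra_def)
      moreover have "(LINT x:a|M. X j t x) = (LINT x:a|M. X j (s j) x)"
        using mart[unfolded martingale1_iff_set_integral] \<open>0 \<le> s j\<close> \<open>s j \<le> t\<close> a by blast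
      ultimately show ?thesis
        using integ \<open>j \<in> I\<close> \<open>0 \<le> s j\<close> \<open>0 \<le> t\<close> by (simp add: set_integrable_of_integrable)
    qed
    show "C \<in> sigma_sets (space M) (sets (nat_filt M X j (s j)) \<union> sets (join_filt M X (I - {j}) s))"
      using join_filt_subset_sigma_Un[OF \<open>j \<in> I\<close>] C by blast
  qed (rule sub_j)
  then show ?thesis
    using integ \<open>j \<in> I\<close> \<open>0 \<le> s j\<close> \<open>0 \<le> t\<close> \<open>C \<in> sets M\<close>
    by (simp add: set_integrable_of_integrable)
qed

lemma param_martingale_of_martingale1:
  fixes X :: "nat \<Rightarrow> real \<Rightarrow> 'a \<Rightarrow> real"
  assumes integ: "\<And>i t. i \<in> I \<Longrightarrow> 0 \<le> t \<Longrightarrow> integrable M (X i t)"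
    and indep: "indep_vars (\<lambda>i. Pi\<^sub>M {0..} (\<lambda>_. borel)) (\<lambda>i \<omega>. restrict (\<lambda>t. X i t \<omega>) {0..}) I"
    and mart: "\<And>i. i \<in> I \<Longrightarrow> martingale1 M (nat_filt M X i) (X i)"
  shows "param_martingale M I (join_filt M X I) (\<lambda>t \<omega>. \<Sum>i\<in>I. X i (t i) \<omega>)"
  unfolding param_martingale_iff_set_integral
proof (intro conjI allI impI ballI)
  fix t :: "nat \<Rightarrow> real" assume t: "\<forall>i\<in>I. 0 \<le> t i"
  show "subalgebra M (join_filt M X I t)"
    using integ by (intro subalgebra_join_filt) auto
  show "integrable M (\<lambda>\<omega>. \<Sum>i\<in>I. X i (t i) \<omega>)"
    using t by (intro Bochner_Integration.integrable_sum integ) auto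
  show "(\<lambda>\<omega>. \<Sum>i\<in>I. X i (t i) \<omega>) \<in> borel_measurable (join_filt M X I t)"
    using t by (intro borel_measurable_sum measurable_join_filt) auto
next
  fix s t :: "nat \<Rightarrow> real" and C
  assume st: "\<forall>i\<in>I. 0 \<le> s i \<and> s i \<le> t i" and C: "C \<in> sets (join_filt M X I s)"
  then have "C \<in> sets M"
    using subalgebra_join_filt[of I X M s] integ by (auto simp: subalgebra_def)
  have int_C: "set_integrable M C (X i r)" if "i \<in> I" "0 \<le> r" for i r
    using integ[OF that] \<open>C \<in> sets M\<close> by (rule set_integrable_of_integrable)
  have "(LINT x:C|M. (\<Sum>i\<in>I. X i (t i) x)) = (\<Sum>i\<in>I. LINT x:C|M. X i (t i) x)"
    using st by (intro set_integral_sum int_C) (auto intro: order_trans)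
  also have "\<dots> = (\<Sum>i\<in>I. LINT x:C|M. X i (s i) x)"
    using st C by (intro sum.cong refl martingale1_set_integral_join_filt[OF integ indep _ mart]) auto
  also have "\<dots> = (LINT x:C|M. (\<Sum>i\<in>I. X i (s i) x))"
    using st by (intro set_integral_sum[symmetric] int_C) auto
  finally show "(LINT x:C|M. (\<Sum>i\<in>I. X i (t i) x)) = (LINT x:C|M. (\<Sum>i\<in>I. X i (s i) x))" .
qed

end

theorem mainTheorem14:
  fixes P :: "'a measure" and X :: "nat \<Rightarrow> real \<Rightarrow> 'a \<Rightarrow> real" and d :: nat
  assumes "prob_space P"
    and "d \<ge> 1"
    and integ: "\<And>i t. i < d \<Longrightarrow> 0 \<le> t \<Longrightarrow> integrable P (X i t)"
    and indep: "prob_space.indep_vars P (\<lambda>i. Pi\<^sub>M {0..} (\<lambda>_. borel))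
                  (\<lambda>i \<omega>. restrict (\<lambda>t. X i t \<omega>) {0..}) {..<d}"
  shows "((param_martingale P {..<d} (join_filt P X {..<d}) (\<lambda>t \<omega>. \<Sum>i<d. X i (t i) \<omega>)
            \<and> (\<forall>i<d. \<forall>s t. 0 \<le> s \<and> 0 \<le> t \<longrightarrow>
                 prob_space.expectation P (X i s) = prob_space.expectation P (X i t)))
          \<longleftrightarrow>
          (\<forall>d'. 1 \<le> d' \<and> d' \<le> d \<longrightarrow>
             param_martingale P {..<d'} (join_filt P X {..<d'}) (\<lambda>t \<omega>. \<Sum>i<d'. X i (t i) \<omega>)))
       \<and>
         ((\<forall>d'. 1 \<le> d' \<and> d' \<le> d \<longrightarrow>
             param_martingale P {..<d'} (join_filt P X {..<d'}) (\<lambda>t \<omega>. \<Sum>i<d'. X i (t i) \<omega>))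
          \<longleftrightarrow>
          (\<forall>i<d. martingale1 P (nat_filt P X i) (X i)))"
proof -
  interpret prob_space P by fact
  have sum_to_coordinates: "\<forall>i<d. martingale1 P (nat_filt P X i) (X i)"
    if "param_martingale P {..<d} (join_filt P X {..<d}) (\<lambda>t \<omega>. \<Sum>i<d. X i (t i) \<omega>)"
    using martingale1_of_param_martingale[OF _ _ _ that] integ by auto
  have coordinates_to_sums:
    "param_martingale P {..<d'} (join_filt P X {..<d'}) (\<lambda>t \<omega>. \<Sum>i<d'. X i (t i) \<omega>)"
    if "\<forall>i<d. martingale1 P (nat_filt P X i) (X i)" "d' \<le> d" for d'
    using that integ indep_vars_subset[OF indep, of "{..<d'}"]
    by (intro param_martingale_of_martingale1) auto
  have coordinates_expectation:
    "\<forall>i<d. \<forall>s t. 0 \<le> s \<and> 0 \<le> t \<longrightarrow> expectation (X i s) = expectation (X i t)"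
    if "\<forall>i<d. martingale1 P (nat_filt P X i) (X i)"
    using that martingale1_expectation_const by blast
  show ?thesis
    using sum_to_coordinates coordinates_to_sums coordinates_expectation \<open>d \<ge> 1\<close> by blast
qed

end
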